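(* Assume each $f_j:\mathbb R^n\to\mathbb R$ ($1\le j\le m$) is continuously differentiable with $L_j$-Lipschitz gradient and $\mu_j$-strongly convex ($0\le\mu_j\le L_j<\infty$), and let $\mu=\min_j\mu_j$. Let $\gamma_0>0$, $x_0,x_1\in\mathbb R^n$, and $\gamma(t)=\mu+(\gamma_0-\mu)e^{-t}$. Let $X,Z:[0,\infty)\to\mathbb R^n$ be locally absolutely continuous with $X(0)=x_0$, $Z(0)=x_0+x_1$, satisfying for almost every $t>0$ $$X'(t)=Z(t)-X(t),\qquad \gamma(t)Z'(t)\in\mu\big(X(t)-Z(t)\big)-\operatorname*{argmin}_{v\in C(X(t))}\langle X(t)-Z(t),v\rangle.$$ For $z\in\mathbb R^n$ define $\mathcal E(t;z):=f(X(t);z)+\frac{\gamma(t)}{2}\|Z(t)-z\|^2$. Then for every $z\in\mathbb R^n$ and almost every $t>0$, $$\frac{d}{dt}\mathcal E(t;z)\le-\mathcal E(t;z)-\frac{\mu}{2}\|Z(t)-X(t)\|^2,$$ and consequently for all $t>0$, $$f(X(t);z)+\frac{\gamma(t)}{2}\|Z(t)-z\|^2\le e^{-t}\Big(f(x_0;z)+\frac{\gamma_0}{2}\|x_0+x_1-z\|^2\Big).$$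
   Context: A function $g$ is $\mu_j$-strongly convex if $g(z)\ge g(y)+\langle\nabla g(y),z-y\rangle+\frac{\mu_j}{2}\|z-y\|^2$ for all $y,z$ ($\mu_j=0$: convex). $C(x)=\mathrm{conv}\{\nabla f_1(x),\dots,\nabla f_m(x)\}$. $f(x;z):=\min_{1\le j\le m}[f_j(x)-f_j(z)]$. The parameter $\gamma$ solves $\gamma'=\mu-\gamma$, $\gamma(0)=\gamma_0$. *)

theory Defs
  imports "HOL-Analysis.Analysis"
begin

definition strongly_convex_grad :: "('a::real_inner \<Rightarrow> real) \<Rightarrow> ('a \<Rightarrow> 'a) \<Rightarrow> real \<Rightarrow> bool" where
  "strongly_convex_grad f g mu \<longleftrightarrow>
     (\<forall>y z. f z \<ge> f y + inner (g y) (z - y) + mu / 2 * (norm (z - y))^2)"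

definition abs_cont_on :: "real \<Rightarrow> real \<Rightarrow> (real \<Rightarrow> 'a::real_normed_vector) \<Rightarrow> bool" where
  "abs_cont_on a b X \<longleftrightarrow>
     (\<forall>e>0. \<exists>d>0. \<forall>(n::nat) (l::nat \<Rightarrow> real) (r::nat \<Rightarrow> real).
        (\<forall>k<n. a \<le> l k \<and> l k \<le> r k \<and> r k \<le> b) \<and>
        (\<forall>k<n. \<forall>k'<n. k \<noteq> k' \<longrightarrow> r k \<le> l k' \<or> r k' \<le> l k) \<and>
        (\<Sum>k<n. r k - l k) < d
        \<longrightarrow> (\<Sum>k<n. norm (X (r k) - X (l k))) < e)"

definition loc_abs_cont :: "(real \<Rightarrow> 'a::real_normed_vector) \<Rightarrow> bool" where
  "loc_abs_cont X \<longleftrightarrow> (\<forall>T\<ge>0. abs_cont_on 0 T X)"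

definition Cset :: "(nat \<Rightarrow> 'a \<Rightarrow> 'a::real_vector) \<Rightarrow> nat \<Rightarrow> 'a \<Rightarrow> 'a set" where
  "Cset g m x = convex hull ((\<lambda>j. g j x) ` {1..m})"

definition argmin_set :: "('a \<Rightarrow> real) \<Rightarrow> 'a set \<Rightarrow> 'a set" where
  "argmin_set h S = {v \<in> S. \<forall>w\<in>S. h v \<le> h w}"

definition fmin :: "(nat \<Rightarrow> 'a \<Rightarrow> real) \<Rightarrow> nat \<Rightarrow> 'a \<Rightarrow> 'a \<Rightarrow> real" where
  "fmin f m x z = Min ((\<lambda>j. f j x - f j z) ` {1..m})"

end

theory Submission
  imports Defs
begin

text \<open>
  Along the flow, f(X t; z) is the minimum of the finitely many functions
  t \<mapsto> f_j(X t) - f_j(z). Two of them can cross with different slopes only at isolated, hence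
  countably many, times, so almost everywhere the minimum is differentiable with the slope
  <grad f_j(X), Z - X> of an active index j. The argmin condition of the dynamics bounds this
  slope by <v, Z - X>; strong convexity, which passes to the convex hull C(X), gives
  <v, z - X> \<le> -f(X; z) - mu/2 |z - X|^2; and with gamma' = mu - gamma a polarisation
  identity turns these two estimates into E' \<le> -E - mu/2 |Z - X|^2.
  The decay estimate follows because exp t * E t is absolutely continuous (all ingredients are
  Lipschitz on the bounded range of the trajectories) with almost everywhere nonpositive
  derivative, hence nonincreasing. That last step is a gauge argument: straddle estimates at
  the tags outside the exceptional null set, absolute continuity on the intervals tagged in it.
\<close>

section \<open>Absolutely continuous functions\<close>

definition nonoverlapping_subintervals :: "real \<Rightarrow> real \<Rightarrow> nat \<Rightarrow> (nat \<Rightarrow> real) \<Rightarrow> (nat \<Rightarrow> real) \<Rightarrow> bool" where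
  "nonoverlapping_subintervals a b n l r \<longleftrightarrow>
     (\<forall>k<n. a \<le> l k \<and> l k \<le> r k \<and> r k \<le> b) \<and>
     (\<forall>k<n. \<forall>k'<n. k \<noteq> k' \<longrightarrow> r k \<le> l k' \<or> r k' \<le> l k)"

definition abs_cont_modulus :: "real \<Rightarrow> real \<Rightarrow> (real \<Rightarrow> 'a::real_normed_vector) \<Rightarrow> real \<Rightarrow> real \<Rightarrow> bool" where
  "abs_cont_modulus a b u d e \<longleftrightarrow>
     (\<forall>n l r. nonoverlapping_subintervals a b n l r \<and> (\<Sum>k<n. r k - l k) < d
        \<longrightarrow> (\<Sum>k<n. norm (u (r k) - u (l k))) < e)"

lemma abs_cont_on_iff_modulus: "abs_cont_on a b u \<longleftrightarrow> (\<forall>e>0. \<exists>d>0. abs_cont_modulus a b u d e)"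
  unfolding abs_cont_on_def abs_cont_modulus_def nonoverlapping_subintervals_def by (simp only: conj_assoc)

lemma abs_cont_modulusD:
  "abs_cont_modulus a b u d e \<Longrightarrow> nonoverlapping_subintervals a b n l r \<Longrightarrow> (\<Sum>k<n. r k - l k) < d
    \<Longrightarrow> (\<Sum>k<n. norm (u (r k) - u (l k))) < e"
  unfolding abs_cont_modulus_def by blast

lemma abs_cont_on_dominated:
  fixes u :: "real \<Rightarrow> 'a::real_normed_vector" and w :: "real \<Rightarrow> 'b::real_normed_vector"
  assumes u: "abs_cont_on a b u" and C: "C \<ge> 0"
    and dom: "\<And>l r. a \<le> l \<Longrightarrow> l \<le> r \<Longrightarrow> r \<le> b \<Longrightarrow> norm (w r - w l) \<le> C * norm (u r - u l)"
  shows "abs_cont_on a b w"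
  unfolding abs_cont_on_iff_modulus
proof (intro allI impI)
  fix e :: real assume "e > 0"
  then have "e / (C + 1) > 0" using C by simp
  then obtain d where "d > 0" and d: "abs_cont_modulus a b u d (e / (C + 1))"
    using u unfolding abs_cont_on_iff_modulus by blast
  have "abs_cont_modulus a b w d e"
    unfolding abs_cont_modulus_def
  proof (intro allI impI, elim conjE)
    fix n l r assume I: "nonoverlapping_subintervals a b n l r" and small: "(\<Sum>k<n. r k - l k) < d"
    have "(\<Sum>k<n. norm (w (r k) - w (l k))) \<le> C * (\<Sum>k<n. norm (u (r k) - u (l k)))"
      using I dom by (auto simp: sum_distrib_left nonoverlapping_subintervals_def intro!: sum_mono)
    also have "\<dots> \<le> C * (e / (C + 1))"
      using abs_cont_modulusD[OF d I small] C by (intro mult_left_mono) auto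
    also have "\<dots> < e" using C \<open>e > 0\<close> by (simp add: field_simps)
    finally show "(\<Sum>k<n. norm (w (r k) - w (l k))) < e" .
  qed
  then show "\<exists>d>0. abs_cont_modulus a b w d e" using \<open>d > 0\<close> by blast
qed

lemma abs_cont_on_ident: "abs_cont_on a b (\<lambda>t::real. t)"
  unfolding abs_cont_on_iff_modulus
proof (intro allI impI)
  fix e :: real assume "e > 0"
  have "abs_cont_modulus a b (\<lambda>t. t) e e"
    unfolding abs_cont_modulus_def
  proof (intro allI impI, elim conjE)
    fix n l r assume "nonoverlapping_subintervals a b n l r" and small: "(\<Sum>k<n. r k - l k) < e"
    then have "(\<Sum>k<n. norm (r k - l k)) = (\<Sum>k<n. r k - l k)"
      by (intro sum.cong) (auto simp: nonoverlapping_subintervals_def)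
    with small show "(\<Sum>k<n. norm (r k - l k)) < e" by simp
  qed
  with \<open>e > 0\<close> show "\<exists>d>0. abs_cont_modulus a b (\<lambda>t. t) d e" by blast
qed

lemma abs_cont_on_Pair:
  fixes u :: "real \<Rightarrow> 'a::real_normed_vector" and v :: "real \<Rightarrow> 'b::real_normed_vector"
  assumes u: "abs_cont_on a b u" and v: "abs_cont_on a b v"
  shows "abs_cont_on a b (\<lambda>t. (u t, v t))"
  unfolding abs_cont_on_iff_modulus
proof (intro allI impI)
  fix e :: real assume "e > 0"
  then obtain d1 d2 where "d1 > 0" "d2 > 0"
    and d1: "abs_cont_modulus a b u d1 (e/2)" and d2: "abs_cont_modulus a b v d2 (e/2)"
    using u v unfolding abs_cont_on_iff_modulus by (meson half_gt_zero)
  have "abs_cont_modulus a b (\<lambda>t. (u t, v t)) (min d1 d2) e"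
    unfolding abs_cont_modulus_def
  proof (intro allI impI, elim conjE)
    fix n l r assume I: "nonoverlapping_subintervals a b n l r" and small: "(\<Sum>k<n. r k - l k) < min d1 d2"
    have "(\<Sum>k<n. norm ((u (r k), v (r k)) - (u (l k), v (l k))))
        \<le> (\<Sum>k<n. norm (u (r k) - u (l k))) + (\<Sum>k<n. norm (v (r k) - v (l k)))"
      unfolding sum.distrib[symmetric] by (intro sum_mono) (simp add: norm_Pair_le)
    also have "\<dots> < e/2 + e/2"
      using abs_cont_modulusD[OF d1 I] abs_cont_modulusD[OF d2 I] small by (intro add_strict_mono) auto
    finally show "(\<Sum>k<n. norm ((u (r k), v (r k)) - (u (l k), v (l k)))) < e" by simp
  qed
  then show "\<exists>d>0. abs_cont_modulus a b (\<lambda>t. (u t, v t)) d e" using \<open>d1 > 0\<close> \<open>d2 > 0\<close>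
    by (intro exI[of _ "min d1 d2"]) auto
qed

lemma abs_cont_on_imp_continuous_on:
  fixes u :: "real \<Rightarrow> 'a::real_normed_vector"
  assumes u: "abs_cont_on a b u"
  shows "continuous_on {a..b} u"
  unfolding continuous_on_iff
proof (intro ballI allI impI)
  fix x e assume x: "x \<in> {a..b}" and "(e::real) > 0"
  then obtain d where "d > 0" and d: "abs_cont_modulus a b u d e"
    using u unfolding abs_cont_on_iff_modulus by blast
  have "dist (u y) (u x) < e" if y: "y \<in> {a..b}" "dist y x < d" for y
  proof -
    have "nonoverlapping_subintervals a b 1 (\<lambda>_. min x y) (\<lambda>_. max x y)"
      using x y by (auto simp: nonoverlapping_subintervals_def)
    from abs_cont_modulusD[OF d this] y(2) have "norm (u (max x y) - u (min x y)) < e"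
      by (simp add: dist_real_def)
    then show ?thesis
      by (cases "x \<le> y") (simp_all add: dist_norm max_def min_def norm_minus_commute[of "u x"])
  qed
  with \<open>d > 0\<close> show "\<exists>d>0. \<forall>y\<in>{a..b}. dist y x < d \<longrightarrow> dist (u y) (u x) < e" by blast
qed

lemma abs_cont_on_bounded:
  fixes u :: "real \<Rightarrow> 'a::real_normed_vector"
  assumes "abs_cont_on a b u"
  obtains R where "R \<ge> 0" "u ` {a..b} \<subseteq> cball 0 R"
proof -
  have "bounded (u ` {a..b})"
    using abs_cont_on_imp_continuous_on[OF assms] by (intro compact_imp_bounded compact_continuous_image) auto
  then obtain R where "\<forall>y\<in>u ` {a..b}. norm y \<le> R" unfolding bounded_iff by blast
  then show ?thesis by (intro that[of "max R 0"]) auto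
qed

lemma abs_cont_on_lipschitz_compose:
  fixes u :: "real \<Rightarrow> 'a::real_normed_vector" and F :: "'a \<Rightarrow> 'b::real_normed_vector"
  assumes "abs_cont_on a b u" "C-lipschitz_on S F" "u ` {a..b} \<subseteq> S"
  shows "abs_cont_on a b (\<lambda>t. F (u t))"
proof (rule abs_cont_on_dominated[OF assms(1) lipschitz_on_nonneg[OF assms(2)]])
  fix l r assume "a \<le> l" "l \<le> r" "r \<le> b"
  then have "u r \<in> S" "u l \<in> S" using assms(3) by auto
  then show "norm (F (u r) - F (u l)) \<le> C * norm (u r - u l)" by (rule lipschitz_on_normD[OF assms(2)])
qed

lemma abs_cont_on_C1:
  fixes \<phi> :: "real \<Rightarrow> real"
  assumes der: "\<And>t. (\<phi> has_real_derivative \<phi>' t) (at t)" and cont: "continuous_on {a..b} \<phi>'"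
  shows "abs_cont_on a b \<phi>"
proof -
  have "bounded (\<phi>' ` {a..b})" using cont by (intro compact_imp_bounded compact_continuous_image) auto
  then obtain B where B: "\<And>t. t \<in> {a..b} \<Longrightarrow> \<bar>\<phi>' t\<bar> \<le> B" unfolding bounded_iff by (metis imageI real_norm_def)
  show ?thesis
  proof (rule abs_cont_on_dominated[OF abs_cont_on_ident, of "max B 0"])
    fix l r assume lr: "a \<le> l" "l \<le> r" "r \<le> b"
    show "norm (\<phi> r - \<phi> l) \<le> max B 0 * norm (r - l)"
    proof (cases "l = r")
      case False
      then obtain s where s: "l < s" "s < r" "\<phi> r - \<phi> l = (r - l) * \<phi>' s"
        using MVT2[OF _ der, of l r] lr False by auto
      have "\<bar>\<phi>' s\<bar> \<le> max B 0" using B[of s] s lr by auto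
      then show ?thesis using s lr by (simp add: abs_mult mult.commute mult_right_mono)
    qed simp
  qed simp
qed

lemma abs_cont_on_add:
  fixes u v :: "real \<Rightarrow> 'a::real_normed_vector"
  assumes "abs_cont_on a b u" "abs_cont_on a b v"
  shows "abs_cont_on a b (\<lambda>t. u t + v t)"
proof (rule abs_cont_on_dominated[OF abs_cont_on_Pair[OF assms], of 2])
  fix l r :: real
  have "norm (u r + v r - (u l + v l)) \<le> norm (u r - u l) + norm (v r - v l)"
    by (metis add_diff_add norm_triangle_ineq)
  also have "\<dots> \<le> 2 * norm ((u r, v r) - (u l, v l))"
    using norm_fst_le[of "u r - u l" "v r - v l"] norm_snd_le[of "v r - v l" "u r - u l"] by simp
  finally show "norm (u r + v r - (u l + v l)) \<le> 2 * norm ((u r, v r) - (u l, v l))" .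
qed simp

lemma abs_cont_on_mult:
  fixes u v :: "real \<Rightarrow> real"
  assumes "abs_cont_on a b u" "abs_cont_on a b v"
  shows "abs_cont_on a b (\<lambda>t. u t * v t)"
proof -
  obtain R1 where R1: "R1 \<ge> 0" "u ` {a..b} \<subseteq> cball 0 R1" using abs_cont_on_bounded[OF assms(1)] .
  obtain R2 where R2: "R2 \<ge> 0" "v ` {a..b} \<subseteq> cball 0 R2" using abs_cont_on_bounded[OF assms(2)] .
  show ?thesis
  proof (rule abs_cont_on_dominated[OF abs_cont_on_Pair[OF assms], of "R1 + R2"])
    fix l r assume lr: "a \<le> l" "l \<le> r" "r \<le> b"
    define \<delta> where "\<delta> = norm ((u r, v r) - (u l, v l))"
    have "u r \<in> cball 0 R1" "v l \<in> cball 0 R2" using R1(2) R2(2) lr by (auto simp: image_subset_iff)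
    then have "\<bar>u r\<bar> \<le> R1" "\<bar>v l\<bar> \<le> R2" by auto
    moreover have "\<bar>u r - u l\<bar> \<le> \<delta>" "\<bar>v r - v l\<bar> \<le> \<delta>"
      using norm_fst_le[of "u r - u l" "v r - v l"] norm_snd_le[of "v r - v l" "u r - u l"] by (auto simp: \<delta>_def)
    ultimately have "\<bar>u r\<bar> * \<bar>v r - v l\<bar> + \<bar>v l\<bar> * \<bar>u r - u l\<bar> \<le> R1 * \<delta> + R2 * \<delta>"
      by (intro add_mono mult_mono) auto
    moreover have "\<bar>u r * v r - u l * v l\<bar> \<le> \<bar>u r\<bar> * \<bar>v r - v l\<bar> + \<bar>v l\<bar> * \<bar>u r - u l\<bar>"
    proof -
      have "u r * v r - u l * v l = u r * (v r - v l) + v l * (u r - u l)" by (simp add: algebra_simps)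
      then show ?thesis using abs_triangle_ineq[of "u r * (v r - v l)" "v l * (u r - u l)"] by (simp add: abs_mult)
    qed
    ultimately have "\<bar>u r * v r - u l * v l\<bar> \<le> R1 * \<delta> + R2 * \<delta>" by linarith
    then show "norm (u r * v r - u l * v l) \<le> (R1 + R2) * \<delta>" by (simp add: distrib_right)
  qed (use R1 R2 in simp)
qed

lemma abs_cont_on_divide_const:
  fixes u :: "real \<Rightarrow> real"
  assumes "abs_cont_on a b u"
  shows "abs_cont_on a b (\<lambda>t. u t / c)"
proof (rule abs_cont_on_dominated[OF assms, of "1 / \<bar>c\<bar>"])
  fix l r
  have "u r / c - u l / c = (u r - u l) / c" by (simp add: diff_divide_distrib)
  then show "norm (u r / c - u l / c) \<le> 1 / \<bar>c\<bar> * norm (u r - u l)" by (simp add: abs_divide)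
qed simp

lemma tagged_partial_division_of_real_intervalE:
  assumes "p tagged_partial_division_of {a..b::real}" "(x, K) \<in> p"
  obtains u v where "K = {u..v}" "u \<le> x" "x \<le> v" "a \<le> u" "v \<le> b"
proof -
  obtain u v where K: "K = cbox u v" using tagged_partial_division_ofD(4)[OF assms] by blast
  have "x \<in> K" "K \<subseteq> {a..b}" using tagged_partial_division_ofD(2,3)[OF assms] by auto
  then show ?thesis using K by (intro that[of u v]) auto
qed

lemma tagged_partial_division_enumerate:
  fixes q :: "(real \<times> real set) set"
  assumes q: "q tagged_partial_division_of {a..b}" and nondegenerate: "\<And>x K. (x, K) \<in> q \<Longrightarrow> Inf K < Sup K"
  obtains n h where "bij_betw h {..<n} q"
    "nonoverlapping_subintervals a b n (\<lambda>k. Inf (snd (h k))) (\<lambda>k. Sup (snd (h k)))"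
proof -
  have "finite q" using q by (rule tagged_partial_division_ofD(1))
  then obtain h where h: "bij_betw h {..<card q} q" using ex_bij_betw_nat_finite lessThan_atLeast0 by metis
  define n where "n = card q"
  define l where "l k = Inf (snd (h k))" for k
  define r where "r k = Sup (snd (h k))" for k
  have hq: "h k \<in> q" if "k < n" for k using h that by (auto simp: n_def bij_betw_def)
  have hlr: "snd (h k) = {l k..r k} \<and> l k < r k \<and> a \<le> l k \<and> r k \<le> b" if "k < n" for k
  proof -
    obtain x K where hk: "h k = (x, K)" by (cases "h k")
    with hq[OF that] have "(x, K) \<in> q" by simp
    then obtain u v where "K = {u..v}" "u \<le> v" "a \<le> u" "v \<le> b"
      using tagged_partial_division_of_real_intervalE[OF q] by (metis order_trans)
    with hk nondegenerate[OF \<open>(x, K) \<in> q\<close>] show ?thesis by (auto simp: l_def r_def)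
  qed
  have "nonoverlapping_subintervals a b n l r"
    unfolding nonoverlapping_subintervals_def
  proof (intro conjI allI impI)
    fix k k' assume k: "k < n" "k' < n" "k \<noteq> k'"
    then have "h k \<noteq> h k'" using h by (auto simp: n_def bij_betw_def inj_on_def)
    then have "interior (snd (h k)) \<inter> interior (snd (h k')) = {}"
      using tagged_partial_division_ofD(5)[OF q] hq k by (metis prod.collapse)
    moreover have "(max (l k) (l k') + min (r k) (r k')) / 2 \<in> interior (snd (h k)) \<inter> interior (snd (h k'))"
      if "max (l k) (l k') < min (r k) (r k')"
      using that hlr[OF k(1)] hlr[OF k(2)] by auto
    ultimately have "\<not> (max (l k) (l k') < min (r k) (r k'))" by blast
    then show "r k \<le> l k' \<or> r k' \<le> l k" using hlr[OF k(1)] hlr[OF k(2)] by auto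
  qed (use hlr less_imp_le in blast)+
  with h show ?thesis unfolding n_def l_def r_def by (rule that)
qed

lemma abs_cont_modulus_tagged_division:
  fixes \<phi> :: "real \<Rightarrow> 'a::real_normed_vector"
  assumes \<phi>: "abs_cont_modulus a b \<phi> d e" and p: "p tagged_division_of {a..b}" and "q \<subseteq> p"
    and small: "(\<Sum>(x, K)\<in>q. measure lborel K) < d"
  shows "(\<Sum>(x, K)\<in>q. norm (\<phi> (Sup K) - \<phi> (Inf K))) < e"
proof -
  have q: "q tagged_partial_division_of {a..b}"
    using p \<open>q \<subseteq> p\<close> by (meson tagged_division_of_def tagged_partial_division_subset)
  then have "finite q" by (rule tagged_partial_division_ofD(1))
  have interval: "\<exists>u v. K = {u..v} \<and> u \<le> v" if "(x, K) \<in> q" for x K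
    using tagged_partial_division_of_real_intervalE[OF q that] by (metis order_trans)
  define q' where "q' = {(x, K) \<in> q. Inf K < Sup K}"
  have "q' \<subseteq> q" by (auto simp: q'_def)
  with q have q': "q' tagged_partial_division_of {a..b}" by (rule tagged_partial_division_subset)
  have nondegenerate: "\<And>x K. (x, K) \<in> q' \<Longrightarrow> Inf K < Sup K" by (auto simp: q'_def)
  obtain n h where h: "bij_betw h {..<n} q'"
    and lr: "nonoverlapping_subintervals a b n (\<lambda>k. Inf (snd (h k))) (\<lambda>k. Sup (snd (h k)))"
    by (rule tagged_partial_division_enumerate[OF q' nondegenerate])
  have sums: "(\<Sum>(x, K)\<in>q'. F (Inf K) (Sup K)) = (\<Sum>k<n. F (Inf (snd (h k))) (Sup (snd (h k))))"
    for F :: "real \<Rightarrow> real \<Rightarrow> real"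
    using sum.reindex_bij_betw[OF h, of "\<lambda>(x, K). F (Inf K) (Sup K)"] by (simp add: case_prod_unfold)
  have "(\<Sum>k<n. Sup (snd (h k)) - Inf (snd (h k))) = (\<Sum>(x, K)\<in>q'. measure lborel K)"
    unfolding sums[of "\<lambda>u v. v - u", symmetric] by (intro sum.cong) (auto simp: q'_def dest!: interval)
  also have "\<dots> \<le> (\<Sum>(x, K)\<in>q. measure lborel K)"
    using \<open>finite q\<close> \<open>q' \<subseteq> q\<close> by (intro sum_mono2) auto
  finally have "(\<Sum>k<n. norm (\<phi> (Sup (snd (h k))) - \<phi> (Inf (snd (h k))))) < e"
    using small by (intro abs_cont_modulusD[OF \<phi> lr]) linarith
  moreover have "(\<Sum>(x, K)\<in>q'. norm (\<phi> (Sup K) - \<phi> (Inf K))) = (\<Sum>(x, K)\<in>q. norm (\<phi> (Sup K) - \<phi> (Inf K)))"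
  proof (rule sum.mono_neutral_left[OF \<open>finite q\<close> \<open>q' \<subseteq> q\<close>], clarify)
    fix x K assume "(x, K) \<in> q" "(x, K) \<notin> q'"
    moreover obtain u v where "K = {u..v}" "u \<le> v" using interval[OF \<open>(x, K) \<in> q\<close>] by blast
    ultimately show "norm (\<phi> (Sup K) - \<phi> (Inf K)) = 0" by (auto simp: q'_def)
  qed
  ultimately show ?thesis using sums[of "\<lambda>u v. norm (\<phi> v - \<phi> u)"] by simp
qed

section \<open>Monotonicity from an almost everywhere derivative bound\<close>

lemma nonpos_derivative_straddle:
  fixes \<phi> :: "real \<Rightarrow> real"
  assumes "D \<le> 0" and der: "(\<phi> has_real_derivative D) (at t)" and "c > 0"
  obtains \<delta> where "\<delta> > 0"
    "\<And>u v. u \<le> t \<Longrightarrow> t \<le> v \<Longrightarrow> t - u < \<delta> \<Longrightarrow> v - t < \<delta> \<Longrightarrow> \<phi> v - \<phi> u \<le> c * (v - u)"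
proof -
  have "(\<phi> has_derivative (\<lambda>h. D * h)) (at t within UNIV)"
    using der by (simp add: has_field_derivative_def)
  then obtain \<delta> where "\<delta> > 0" and \<delta>: "\<And>y. norm (y - t) < \<delta> \<Longrightarrow>
      norm (\<phi> y - \<phi> t - D * (y - t)) \<le> c * norm (y - t)"
    using \<open>c > 0\<close> unfolding has_derivative_within_alt by blast
  show ?thesis
  proof (rule that[OF \<open>\<delta> > 0\<close>])
    fix u v assume uv: "u \<le> t" "t \<le> v" "t - u < \<delta>" "v - t < \<delta>"
    then have "\<bar>\<phi> v - \<phi> t - D * (v - t)\<bar> \<le> c * (v - t)" "\<bar>\<phi> u - \<phi> t - D * (u - t)\<bar> \<le> c * (t - u)"
      using \<delta>[of v] \<delta>[of u] by auto
    moreover have "D * (v - t) - D * (u - t) = D * (v - u)" by (simp add: algebra_simps)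
    moreover have "D * (v - u) \<le> 0" using uv \<open>D \<le> 0\<close> by (simp add: mult_nonpos_nonneg)
    moreover have "c * (v - u) = c * (v - t) + c * (t - u)" by (simp add: algebra_simps)
    ultimately show "\<phi> v - \<phi> u \<le> c * (v - u)" unfolding abs_le_iff by linarith
  qed
qed

lemma tagged_division_straddle_sum_le:
  fixes \<phi> :: "real \<Rightarrow> real"
  assumes "a \<le> b" and p: "p tagged_division_of {a..b}" and fine: "(\<lambda>t. ball t (\<delta> t)) fine p"
    and "q \<subseteq> p" and "c \<ge> 0"
    and straddle: "\<And>x u v. (x, {u..v}) \<in> q \<Longrightarrow> u \<le> x \<Longrightarrow> x \<le> v \<Longrightarrow> x - u < \<delta> x \<Longrightarrow> v - x < \<delta> x
      \<Longrightarrow> \<phi> v - \<phi> u \<le> c * (v - u)"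
  shows "(\<Sum>(x, K)\<in>q. \<phi> (Sup K) - \<phi> (Inf K)) \<le> c * (b - a)"
proof -
  have p': "p tagged_partial_division_of {a..b}" using p by (simp add: tagged_division_of_def)
  then have "finite p" by (rule tagged_partial_division_ofD(1))
  have "(\<Sum>(x, K)\<in>q. \<phi> (Sup K) - \<phi> (Inf K)) \<le> (\<Sum>(x, K)\<in>q. c * measure lborel K)"
  proof (intro sum_mono, clarify)
    fix x K assume xK: "(x, K) \<in> q"
    then obtain u v where K: "K = {u..v}" "u \<le> x" "x \<le> v"
      using tagged_partial_division_of_real_intervalE[OF p'] \<open>q \<subseteq> p\<close> by blast
    have "K \<subseteq> ball x (\<delta> x)" using fine xK \<open>q \<subseteq> p\<close> unfolding fine_def by blast
    moreover have "u \<in> K" "v \<in> K" using K by auto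
    ultimately have "u \<in> ball x (\<delta> x)" "v \<in> ball x (\<delta> x)" by auto
    then have "\<phi> v - \<phi> u \<le> c * (v - u)" using straddle xK K by (auto simp: dist_real_def)
    then show "\<phi> (Sup K) - \<phi> (Inf K) \<le> c * measure lborel K" using K by simp
  qed
  also have "\<dots> \<le> c * (\<Sum>(x, K)\<in>p. measure lborel K)"
    unfolding sum_distrib_left[symmetric] case_prod_unfold using \<open>finite p\<close> \<open>q \<subseteq> p\<close> \<open>c \<ge> 0\<close>
    by (intro mult_left_mono sum_mono2) auto
  also have "(\<Sum>(x, K)\<in>p. measure lborel K) \<le> b - a"
    using additive_content_tagged_division[of p a b] p \<open>a \<le> b\<close> by simp
  finally show ?thesis using \<open>c \<ge> 0\<close> by (simp add: mult_left_mono order_trans)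
qed

lemma nonpos_derivative_straddle_gauge:
  fixes \<phi> :: "real \<Rightarrow> real"
  assumes "\<And>t. t \<in> S \<Longrightarrow> \<exists>D\<le>0. (\<phi> has_real_derivative D) (at t)" and "c > 0"
  obtains \<delta> where "\<And>t. \<delta> t > 0" "\<And>t u v. t \<in> S \<Longrightarrow> u \<le> t \<Longrightarrow> t \<le> v \<Longrightarrow> t - u < \<delta> t \<Longrightarrow> v - t < \<delta> t
    \<Longrightarrow> \<phi> v - \<phi> u \<le> c * (v - u)"
proof -
  have "\<exists>\<delta>>0. t \<in> S \<longrightarrow> (\<forall>u v. u \<le> t \<longrightarrow> t \<le> v \<longrightarrow> t - u < \<delta> \<longrightarrow> v - t < \<delta> \<longrightarrow> \<phi> v - \<phi> u \<le> c * (v - u))"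
    for t
  proof (cases "t \<in> S")
    case True
    then obtain D where "D \<le> 0" "(\<phi> has_real_derivative D) (at t)" using assms(1) by blast
    from nonpos_derivative_straddle[OF this \<open>c > 0\<close>] show ?thesis by metis
  qed (auto intro: exI[of _ 1])
  then show ?thesis using that by metis
qed

lemma negligible_gauge:
  assumes "negligible N" "d > 0"
  obtains \<gamma> where "gauge \<gamma>"
    "\<And>p. p tagged_division_of {a..b::real} \<Longrightarrow> \<gamma> fine p \<Longrightarrow> (\<Sum>(x, K)\<in>p. measure lborel K * indicator N x) < d"
proof -
  have "(indicat_real N has_integral 0) (cbox a b)" using assms(1) unfolding negligible_def by blast
  from this[unfolded has_integral, rule_format, OF \<open>d > 0\<close>] obtain \<gamma> where "gauge \<gamma>"
    and \<gamma>: "\<forall>p. p tagged_division_of cbox a b \<and> \<gamma> fine p \<longrightarrow>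
      norm ((\<Sum>(x, K)\<in>p. measure lborel K *\<^sub>R indicat_real N x) - 0) < d"
    by blast
  show ?thesis using \<open>gauge \<gamma>\<close> \<gamma> by (intro that) (auto simp: case_prod_unfold)
qed

lemma AE_lborel_negligible_exception:
  assumes "AE t in lborel. P t"
  obtains N where "negligible N" "\<And>t. t \<notin> N \<Longrightarrow> P t"
proof -
  from assms obtain N where "{t \<in> space lborel. \<not> P t} \<subseteq> N" "emeasure lborel N = 0" "N \<in> sets lborel"
    by (rule AE_E)
  then show ?thesis
    by (intro that[of N]) (auto simp: negligible_iff_null_sets null_sets_def intro: null_sets_completionI)
qed

lemma abs_cont_on_nonincreasing:
  fixes \<phi> :: "real \<Rightarrow> real"
  assumes "a \<le> b" and \<phi>: "abs_cont_on a b \<phi>"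
    and deriv: "AE t in lborel. a < t \<longrightarrow> t < b \<longrightarrow> (\<exists>D\<le>0. (\<phi> has_real_derivative D) (at t))"
  shows "\<phi> b \<le> \<phi> a"
proof (rule field_le_epsilon)
  fix e :: real assume "e > 0"
  obtain N0 where "negligible N0"
    and N0: "\<And>t. t \<notin> N0 \<Longrightarrow> a < t \<longrightarrow> t < b \<longrightarrow> (\<exists>D\<le>0. (\<phi> has_real_derivative D) (at t))"
    using AE_lborel_negligible_exception[OF deriv] by blast
  define N where "N = insert a (insert b N0)"
  have "negligible N" using \<open>negligible N0\<close> by (simp add: N_def)
  define c where "c = e / (2 * (b - a + 1))"
  have "c > 0" using \<open>e > 0\<close> \<open>a \<le> b\<close> by (simp add: c_def)
  have "c * (b - a) \<le> c * (b - a + 1)" using \<open>c > 0\<close> by simp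
  then have c_le: "c * (b - a) \<le> e / 2" using \<open>a \<le> b\<close> \<open>e > 0\<close> by (simp add: c_def field_simps)
  obtain d where "d > 0" and d: "abs_cont_modulus a b \<phi> d (e / 2)"
    using \<phi> \<open>e > 0\<close> unfolding abs_cont_on_iff_modulus by (meson half_gt_zero)
  obtain \<gamma> where "gauge \<gamma>"
    and \<gamma>: "\<And>p. p tagged_division_of {a..b} \<Longrightarrow> \<gamma> fine p \<Longrightarrow> (\<Sum>(x, K)\<in>p. measure lborel K * indicator N x) < d"
    using negligible_gauge[OF \<open>negligible N\<close> \<open>d > 0\<close>] by blast
  have "\<exists>D\<le>0. (\<phi> has_real_derivative D) (at t)" if "t \<in> {a..b} - N" for t
    using N0[of t] that by (auto simp: N_def)
  from nonpos_derivative_straddle_gauge[OF this \<open>c > 0\<close>] obtain \<delta> where "\<And>t. \<delta> t > 0"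
    and straddle: "\<And>t u v. t \<in> {a..b} - N \<Longrightarrow> u \<le> t \<Longrightarrow> t \<le> v \<Longrightarrow> t - u < \<delta> t \<Longrightarrow> v - t < \<delta> t
      \<Longrightarrow> \<phi> v - \<phi> u \<le> c * (v - u)"
    by blast
  then have "gauge (\<lambda>t. ball t (\<delta> t))" by (auto simp: gauge_def)
  then obtain p where p: "p tagged_division_of {a..b}" and fine: "(\<lambda>t. \<gamma> t \<inter> ball t (\<delta> t)) fine p"
    using fine_division_exists_real[OF gauge_Int[OF \<open>gauge \<gamma>\<close>]] by blast
  define pN where "pN = {(x, K) \<in> p. x \<in> N}"
  have "finite p" "pN \<subseteq> p" using p by (auto simp: pN_def)
  have "\<phi> b - \<phi> a = (\<Sum>(x, K)\<in>p - pN. \<phi> (Sup K) - \<phi> (Inf K)) + (\<Sum>(x, K)\<in>pN. \<phi> (Sup K) - \<phi> (Inf K))"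
    using additive_tagged_division_1[OF \<open>a \<le> b\<close> p, of \<phi>]
      sum.subset_diff[OF \<open>pN \<subseteq> p\<close> \<open>finite p\<close>, of "\<lambda>(x, K). \<phi> (Sup K) - \<phi> (Inf K)"]
    by simp
  also have "(\<Sum>(x, K)\<in>p - pN. \<phi> (Sup K) - \<phi> (Inf K)) \<le> c * (b - a)"
  proof (rule tagged_division_straddle_sum_le[OF \<open>a \<le> b\<close> p _ _ less_imp_le[OF \<open>c > 0\<close>]])
    show "(\<lambda>t. ball t (\<delta> t)) fine p" using fine by (simp add: fine_Int)
    fix x u v assume xuv: "(x, {u..v}) \<in> p - pN" "u \<le> x" "x \<le> v" "x - u < \<delta> x" "v - x < \<delta> x"
    then have "x \<in> {a..b} - N" using tagged_division_ofD(2,3)[OF p, of x "{u..v}"] by (auto simp: pN_def)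
    with xuv show "\<phi> v - \<phi> u \<le> c * (v - u)" by (intro straddle) auto
  qed auto
  also have "(\<Sum>(x, K)\<in>pN. \<phi> (Sup K) - \<phi> (Inf K)) < e / 2"
  proof -
    have "(\<Sum>(x, K)\<in>pN. measure lborel K) = (\<Sum>(x, K)\<in>p. measure lborel K * indicator N x)"
      using \<open>finite p\<close> by (intro sum.mono_neutral_cong_left) (auto simp: pN_def indicator_def)
    also have "\<dots> < d" using \<gamma> p fine by (simp add: fine_Int)
    finally have "(\<Sum>(x, K)\<in>pN. norm (\<phi> (Sup K) - \<phi> (Inf K))) < e / 2"
      by (rule abs_cont_modulus_tagged_division[OF d p \<open>pN \<subseteq> p\<close>])
    moreover have "(\<Sum>(x, K)\<in>pN. \<phi> (Sup K) - \<phi> (Inf K)) \<le> (\<Sum>(x, K)\<in>pN. norm (\<phi> (Sup K) - \<phi> (Inf K)))"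
      by (intro sum_mono) auto
    ultimately show ?thesis by linarith
  qed
  finally show "\<phi> b \<le> \<phi> a + e" using c_le by simp
qed

section \<open>Derivative of a finite minimum\<close>

lemma has_real_derivative_abs_at_zero:
  fixes \<phi> :: "real \<Rightarrow> real"
  assumes der: "(\<phi> has_real_derivative 0) (at t)" and "\<phi> t = 0"
  shows "((\<lambda>s. \<bar>\<phi> s\<bar>) has_real_derivative 0) (at t)"
proof -
  have "((\<lambda>s. \<bar>\<phi> s\<bar>) has_derivative (\<lambda>h. 0 * h)) (at t within UNIV)"
    unfolding has_derivative_within_alt
  proof (intro conjI allI impI)
    fix e :: real assume "e > 0"
    with der obtain d where "d > 0" and d: "\<forall>y\<in>UNIV. norm (y - t) < d \<longrightarrow>
        norm (\<phi> y - \<phi> t - 0 * (y - t)) \<le> e * norm (y - t)"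
      unfolding has_field_derivative_def has_derivative_within_alt by blast
    show "\<exists>d>0. \<forall>y\<in>UNIV. norm (y - t) < d \<longrightarrow> norm (\<bar>\<phi> y\<bar> - \<bar>\<phi> t\<bar> - 0 * (y - t)) \<le> e * norm (y - t)"
      using \<open>d > 0\<close> d \<open>\<phi> t = 0\<close> by (intro exI[of _ d]) auto
  qed (rule bounded_linear_mult_right)
  then show ?thesis by (simp only: has_field_derivative_def)
qed

lemma has_real_derivative_min:
  fixes f1 f2 :: "real \<Rightarrow> real"
  assumes d1: "(f1 has_real_derivative D1) (at t)" and d2: "(f2 has_real_derivative D2) (at t)"
    and tie: "f1 t = f2 t \<Longrightarrow> D1 = D2"
  shows "((\<lambda>s. min (f1 s) (f2 s)) has_real_derivative (if f1 t \<le> f2 t then D1 else D2)) (at t)"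
proof -
  have lim: "((\<lambda>s. f2 s - f1 s) \<longlongrightarrow> f2 t - f1 t) (at t)"
    using DERIV_isCont[OF d1] DERIV_isCont[OF d2] unfolding isCont_def by (intro tendsto_diff)
  consider "f1 t < f2 t" | "f1 t > f2 t" | "f1 t = f2 t" by linarith
  then show ?thesis
  proof cases
    case 1
    then have "eventually (\<lambda>s. f2 s - f1 s > 0) (at t)" using lim by (intro order_tendstoD(1)) auto
    then have "eventually (\<lambda>s. f1 s = min (f1 s) (f2 s)) (at t)" by eventually_elim auto
    from has_field_derivative_cong_eventually[OF this] d1 1 show ?thesis by simp
  next
    case 2
    then have "eventually (\<lambda>s. f2 s - f1 s < 0) (at t)" using lim by (intro order_tendstoD(2)) auto
    then have "eventually (\<lambda>s. f2 s = min (f1 s) (f2 s)) (at t)" by eventually_elim auto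
    from has_field_derivative_cong_eventually[OF this] d2 2 show ?thesis by simp
  next
    case 3
    then have "D1 = D2" by (rule tie)
    have "((\<lambda>s. \<bar>f1 s - f2 s\<bar>) has_real_derivative 0) (at t)"
      using has_real_derivative_abs_at_zero[of "\<lambda>s. f1 s - f2 s"] DERIV_diff[OF d1 d2] \<open>D1 = D2\<close> 3 by simp
    from DERIV_diff[OF d1 DERIV_cdivide[OF DERIV_add[OF this DERIV_diff[OF d1 d2]]], of 2]
    have "((\<lambda>s. f1 s - (\<bar>f1 s - f2 s\<bar> + (f1 s - f2 s)) / 2) has_real_derivative D1) (at t)"
      using \<open>D1 = D2\<close> by simp
    moreover have "(\<lambda>s. f1 s - (\<bar>f1 s - f2 s\<bar> + (f1 s - f2 s)) / 2) = (\<lambda>s. min (f1 s) (f2 s))"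
    proof
      fix s
      show "f1 s - (\<bar>f1 s - f2 s\<bar> + (f1 s - f2 s)) / 2 = min (f1 s) (f2 s)"
        by (cases "f1 s \<le> f2 s") (simp_all add: abs_of_nonpos abs_of_pos field_simps)
    qed
    ultimately show ?thesis using 3 by simp
  qed
qed

lemma has_real_derivative_Min:
  fixes h :: "'j \<Rightarrow> real \<Rightarrow> real"
  assumes "finite J" "J \<noteq> {}"
    and "\<And>j. j \<in> J \<Longrightarrow> (h j has_real_derivative d j) (at t)"
    and "\<And>i j. i \<in> J \<Longrightarrow> j \<in> J \<Longrightarrow> h i t = h j t \<Longrightarrow> d i = d j"
  shows "\<exists>j\<in>J. h j t = Min ((\<lambda>j. h j t) ` J) \<and> ((\<lambda>s. Min ((\<lambda>j. h j s) ` J)) has_real_derivative d j) (at t)"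
  using assms
proof (induction J rule: finite_ne_induct)
  case (singleton x)
  show ?case using singleton.prems(1)[of x] by simp
next
  case (insert x F)
  have "\<exists>j\<in>F. h j t = Min ((\<lambda>j. h j t) ` F) \<and> ((\<lambda>s. Min ((\<lambda>j. h j s) ` F)) has_real_derivative d j) (at t)"
    by (intro insert.IH; use insert.prems in blast)
  then obtain k where k: "k \<in> F" "Min ((\<lambda>j. h j t) ` F) = h k t"
      "((\<lambda>s. Min ((\<lambda>j. h j s) ` F)) has_real_derivative d k) (at t)"
    by (metis (no_types, lifting))
  have Min_insert: "Min ((\<lambda>j. h j s) ` insert x F) = min (h x s) (Min ((\<lambda>j. h j s) ` F))" for s
    using insert.hyps(1,2) by simp
  have "h x t = h k t \<Longrightarrow> d x = d k" using insert.prems(2)[of x k] k(1) by simp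
  then have "((\<lambda>s. min (h x s) (Min ((\<lambda>j. h j s) ` F))) has_real_derivative
      (if h x t \<le> h k t then d x else d k)) (at t)"
    using has_real_derivative_min[OF insert.prems(1)[of x] k(3)] k(2) by simp
  then show ?case using k(1,2) unfolding Min_insert by (cases "h x t \<le> h k t") (auto simp: min_def)
qed

lemma discrete_imp_countable:
  fixes P :: "'a::second_countable_topology set"
  assumes "\<And>t. t \<in> P \<Longrightarrow> openin (top_of_set P) {t}"
  shows "countable P"
proof -
  obtain \<B> where "countable \<B>"
    and \<B>: "\<And>T. openin (top_of_set P) T \<Longrightarrow> \<exists>\<U>. \<U> \<subseteq> \<B> \<and> T = \<Union>\<U>"
    by (meson subset_second_countable)
  have "{t} \<in> \<B>" if t: "t \<in> P" for t
  proof -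
    obtain \<U> where "\<U> \<subseteq> \<B>" "{t} = \<Union>\<U>" using \<B>[OF assms[OF t]] by blast
    then obtain V where "V \<in> \<U>" "t \<in> V" by blast
    moreover from this have "V \<subseteq> {t}" using \<open>{t} = \<Union>\<U>\<close> by blast
    ultimately have "V = {t}" by blast
    with \<open>V \<in> \<U>\<close> \<open>\<U> \<subseteq> \<B>\<close> show ?thesis by blast
  qed
  then have "(\<lambda>t. {t}) ` P \<subseteq> \<B>" by blast
  with \<open>countable \<B>\<close> have "countable ((\<lambda>t. {t}) ` P)" by (rule countable_subset[rotated])
  then show ?thesis by (rule countable_image_inj_on) (simp add: inj_on_def)
qed

lemma nonzero_derivative_isolated_zero:
  fixes \<phi> :: "real \<Rightarrow> real"
  assumes der: "(\<phi> has_real_derivative D) (at t)" and "D \<noteq> 0" and "\<phi> t = 0"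
  obtains e where "e > 0" "\<And>s. \<bar>s - t\<bar> < e \<Longrightarrow> \<phi> s = 0 \<Longrightarrow> s = t"
proof -
  have "\<bar>D\<bar> / 2 > 0" using \<open>D \<noteq> 0\<close> by simp
  with der obtain e where "e > 0" and e: "\<And>y. norm (y - t) < e \<Longrightarrow>
      norm (\<phi> y - \<phi> t - D * (y - t)) \<le> \<bar>D\<bar> / 2 * norm (y - t)"
    unfolding has_field_derivative_def has_derivative_within_alt by blast
  show ?thesis
  proof (rule that[OF \<open>e > 0\<close>])
    fix s assume "\<bar>s - t\<bar> < e" "\<phi> s = 0"
    with e[of s] \<open>\<phi> t = 0\<close> have "\<bar>D\<bar> * \<bar>s - t\<bar> \<le> \<bar>D\<bar> / 2 * \<bar>s - t\<bar>" by (simp add: abs_mult)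
    with \<open>\<bar>D\<bar> / 2 > 0\<close> show "s = t" by (simp add: mult_le_cancel_right)
  qed
qed

lemma countable_zeros_with_nonzero_derivative:
  fixes \<phi> :: "real \<Rightarrow> real"
  shows "countable {t. \<phi> t = 0 \<and> (\<exists>D. D \<noteq> 0 \<and> (\<phi> has_real_derivative D) (at t))}" (is "countable ?P")
proof (rule discrete_imp_countable)
  fix t assume "t \<in> ?P"
  then obtain e where "e > 0" and e: "\<And>s. \<bar>s - t\<bar> < e \<Longrightarrow> \<phi> s = 0 \<Longrightarrow> s = t"
    using nonzero_derivative_isolated_zero by blast
  then have "{t} = ?P \<inter> ball t e" using \<open>t \<in> ?P\<close> by (auto simp: dist_real_def abs_minus_commute)
  then show "openin (top_of_set ?P) {t}" using openin_open_Int[of "ball t e" ?P] by simp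
qed

lemma AE_has_real_derivative_Min:
  fixes h :: "'j \<Rightarrow> real \<Rightarrow> real"
  assumes "finite J" "J \<noteq> {}"
  shows "AE t in lborel. \<forall>d. (\<forall>j\<in>J. (h j has_real_derivative d j) (at t)) \<longrightarrow>
    (\<exists>j\<in>J. h j t = Min ((\<lambda>j. h j t) ` J) \<and> ((\<lambda>s. Min ((\<lambda>j. h j s) ` J)) has_real_derivative d j) (at t))"
proof -
  define B where "B = (\<Union>i\<in>J. \<Union>j\<in>J. {t. h i t - h j t = 0 \<and>
      (\<exists>D. D \<noteq> 0 \<and> ((\<lambda>s. h i s - h j s) has_real_derivative D) (at t))})"
  have "countable B"
    unfolding B_def
    by (intro countable_UN countable_finite[OF \<open>finite J\<close>] countable_zeros_with_nonzero_derivative)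
  then have "AE t in lborel. t \<notin> B" by (rule AE_I'[OF countable_imp_null_set_lborel]) auto
  then show ?thesis
  proof eventually_elim
    case (elim t)
    show ?case
    proof (intro allI impI has_real_derivative_Min[OF assms])
      fix d i j assume "\<forall>j\<in>J. (h j has_real_derivative d j) (at t)"
        and "i \<in> J" "j \<in> J" "h i t = h j t"
      then have "((\<lambda>s. h i s - h j s) has_real_derivative d i - d j) (at t)" by (intro DERIV_diff) auto
      show "d i = d j"
      proof (rule ccontr)
        assume "d i \<noteq> d j"
        then have "d i - d j \<noteq> 0" "h i t - h j t = 0" using \<open>h i t = h j t\<close> by simp_all
        with \<open>((\<lambda>s. h i s - h j s) has_real_derivative d i - d j) (at t)\<close>
        have "t \<in> B" unfolding B_def using \<open>i \<in> J\<close> \<open>j \<in> J\<close> by blast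
        with elim show False by blast
      qed
    qed auto
  qed
qed

section \<open>Chain rules and Lipschitz estimates\<close>

lemma has_real_derivative_norm_diff_power2:
  fixes Z :: "real \<Rightarrow> 'a::real_inner"
  assumes "(Z has_vector_derivative Z') (at t)"
  shows "((\<lambda>s. (norm (Z s - z))^2) has_real_derivative 2 * inner (Z t - z) Z') (at t)"
proof -
  have "((\<lambda>s. Z s - z) has_derivative (\<lambda>h. h *\<^sub>R Z')) (at t)"
    using assms unfolding has_vector_derivative_def by (intro derivative_eq_intros) auto
  from has_derivative_inner[OF this this]
  have "((\<lambda>s. inner (Z s - z) (Z s - z)) has_derivative (\<lambda>h. (2 * inner (Z t - z) Z') * h)) (at t)"
    by (rule has_derivative_eq_rhs) (auto simp: fun_eq_iff inner_commute algebra_simps)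
  then show ?thesis unfolding has_field_derivative_def power2_norm_eq_inner .
qed

lemma has_real_derivative_gradient_compose:
  fixes X :: "real \<Rightarrow> 'a::real_inner"
  assumes "(f has_derivative (\<lambda>h. inner G h)) (at (X t))" and "(X has_vector_derivative X') (at t)"
  shows "((\<lambda>s. f (X s)) has_real_derivative inner G X') (at t)"
proof -
  have "(X has_derivative (\<lambda>h. h *\<^sub>R X')) (at t)" using assms(2) by (simp add: has_vector_derivative_def)
  from has_derivative_compose[OF this assms(1)]
  have "((\<lambda>s. f (X s)) has_derivative (\<lambda>h. inner G X' * h)) (at t)"
    by (rule has_derivative_eq_rhs) (auto simp: fun_eq_iff)
  then show ?thesis by (simp add: has_field_derivative_def)
qed

lemma lipschitz_on_Min:
  fixes h :: "'j \<Rightarrow> 'a::metric_space \<Rightarrow> real"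
  assumes "finite J" "J \<noteq> {}" and lip: "\<And>j. j \<in> J \<Longrightarrow> C-lipschitz_on S (h j)"
  shows "C-lipschitz_on S (\<lambda>x. Min ((\<lambda>j. h j x) ` J))"
proof (rule lipschitz_onI)
  show "0 \<le> C" using lip \<open>J \<noteq> {}\<close> lipschitz_on_nonneg by blast
  fix x y assume "x \<in> S" "y \<in> S"
  have "Min ((\<lambda>j. h j x) ` J) \<in> (\<lambda>j. h j x) ` J" "Min ((\<lambda>j. h j y) ` J) \<in> (\<lambda>j. h j y) ` J"
    using assms(1,2) by simp_all
  then obtain i k where "i \<in> J" "k \<in> J"
    and i: "Min ((\<lambda>j. h j x) ` J) = h i x" and k: "Min ((\<lambda>j. h j y) ` J) = h k y"
    by blast
  have "Min ((\<lambda>j. h j y) ` J) \<le> h i y" "Min ((\<lambda>j. h j x) ` J) \<le> h k x"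
    using \<open>i \<in> J\<close> \<open>k \<in> J\<close> \<open>finite J\<close> by auto
  moreover have "\<bar>h i x - h i y\<bar> \<le> C * dist x y" "\<bar>h k x - h k y\<bar> \<le> C * dist x y"
    using lipschitz_onD[OF lip \<open>x \<in> S\<close> \<open>y \<in> S\<close>] \<open>i \<in> J\<close> \<open>k \<in> J\<close> by (auto simp: dist_real_def)
  ultimately show "dist (Min ((\<lambda>j. h j x) ` J)) (Min ((\<lambda>j. h j y) ` J)) \<le> C * dist x y"
    unfolding dist_real_def i k abs_le_iff by linarith
qed

lemma strongly_convex_grad_abs_diff_le:
  fixes f :: "'a::real_inner \<Rightarrow> real"
  assumes "strongly_convex_grad f g mu" and "mu \<ge> 0"
  shows "\<bar>f y - f x\<bar> \<le> max (norm (g x)) (norm (g y)) * norm (y - x)"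
proof -
  have "f y \<ge> f x + inner (g x) (y - x) + mu / 2 * (norm (y - x))^2"
    "f x \<ge> f y + inner (g y) (x - y) + mu / 2 * (norm (x - y))^2"
    using assms(1) unfolding strongly_convex_grad_def by blast+
  moreover have "mu / 2 * (norm (y - x))^2 \<ge> 0" "mu / 2 * (norm (x - y))^2 \<ge> 0"
    using \<open>mu \<ge> 0\<close> by simp_all
  moreover have "\<bar>inner (g x) (y - x)\<bar> \<le> norm (g x) * norm (y - x)"
    "\<bar>inner (g y) (x - y)\<bar> \<le> norm (g y) * norm (y - x)"
    using Cauchy_Schwarz_ineq2[of "g x" "y - x"] Cauchy_Schwarz_ineq2[of "g y" "x - y"]
      norm_minus_commute[of x y] by simp_all
  moreover have "norm (g x) * norm (y - x) \<le> max (norm (g x)) (norm (g y)) * norm (y - x)"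
    "norm (g y) * norm (y - x) \<le> max (norm (g x)) (norm (g y)) * norm (y - x)"
    by (simp_all add: mult_right_mono)
  ultimately show ?thesis unfolding abs_le_iff by linarith
qed

lemma lipschitz_on_cball_strongly_convex_grad:
  fixes f :: "'a::real_inner \<Rightarrow> real"
  assumes "strongly_convex_grad f g mu" "mu \<ge> 0" "L-lipschitz_on UNIV g" "R \<ge> 0"
  shows "(norm (g 0) + L * R)-lipschitz_on (cball 0 R) f"
proof (rule lipschitz_onI)
  have "L \<ge> 0" using assms(3) by (rule lipschitz_on_nonneg)
  have gbound: "norm (g x) \<le> norm (g 0) + L * R" if "x \<in> cball 0 R" for x
  proof -
    have "norm (g x - g 0) \<le> L * norm (x - 0)" using lipschitz_on_normD[OF assms(3)] by blast
    also have "\<dots> \<le> L * R" using that \<open>L \<ge> 0\<close> by (intro mult_left_mono) auto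
    finally show ?thesis using norm_triangle_ineq2[of "g x" "g 0"] by linarith
  qed
  show "0 \<le> norm (g 0) + L * R" using \<open>L \<ge> 0\<close> \<open>R \<ge> 0\<close> by simp
  fix x y :: 'a assume "x \<in> cball 0 R" "y \<in> cball 0 R"
  then have "max (norm (g y)) (norm (g x)) * norm (x - y) \<le> (norm (g 0) + L * R) * norm (x - y)"
    using gbound by (intro mult_right_mono) auto
  then show "dist (f x) (f y) \<le> (norm (g 0) + L * R) * dist x y"
    using strongly_convex_grad_abs_diff_le[OF assms(1,2), of x y] by (simp add: dist_norm dist_real_def)
qed

lemma lipschitz_on_cball_fmin:
  assumes "m \<ge> 1" "R \<ge> 0"
    and "\<And>j. j \<in> {1..m} \<Longrightarrow> strongly_convex_grad (f j) (g j) (mu j)" "\<And>j. j \<in> {1..m} \<Longrightarrow> mu j \<ge> 0"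
    and "\<And>j. j \<in> {1..m} \<Longrightarrow> (L j)-lipschitz_on UNIV (g j)"
  shows "(\<Sum>j\<in>{1..m}. norm (g j 0) + L j * R)-lipschitz_on (cball 0 R) (\<lambda>x. fmin f m x z)"
  unfolding fmin_def
proof (rule lipschitz_on_Min)
  fix j assume j: "j \<in> {1..m}"
  have nonneg: "norm (g i 0) + L i * R \<ge> 0" if "i \<in> {1..m}" for i
    using lipschitz_on_nonneg[OF assms(5)[OF that]] \<open>R \<ge> 0\<close> by simp
  have "(norm (g j 0) + L j * R)-lipschitz_on (cball 0 R) (f j)"
    using assms(3)[OF j] assms(4)[OF j] assms(5)[OF j] assms(2) by (rule lipschitz_on_cball_strongly_convex_grad)
  then have "(norm (g j 0) + L j * R)-lipschitz_on (cball 0 R) (\<lambda>x. f j x - f j z)"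
    by (simp add: lipschitz_on_def dist_real_def)
  then show "(\<Sum>j\<in>{1..m}. norm (g j 0) + L j * R)-lipschitz_on (cball 0 R) (\<lambda>x. f j x - f j z)"
    by (rule lipschitz_on_le) (use j nonneg in \<open>intro member_le_sum\<close>; auto)
qed (use \<open>m \<ge> 1\<close> in auto)

lemma lipschitz_on_cball_norm_diff_power2:
  fixes z :: "'a::real_normed_vector"
  assumes "R \<ge> 0"
  shows "(2 * (R + norm z))-lipschitz_on (cball 0 R) (\<lambda>y. (norm (y - z))^2)"
proof (rule lipschitz_onI)
  fix x y :: 'a assume "x \<in> cball 0 R" "y \<in> cball 0 R"
  then have "norm (x - z) \<le> R + norm z" "norm (y - z) \<le> R + norm z"
    using norm_triangle_ineq4[of x z] norm_triangle_ineq4[of y z] by auto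
  then have "\<bar>norm (x - z) - norm (y - z)\<bar> * (norm (x - z) + norm (y - z)) \<le> norm (x - y) * (2 * (R + norm z))"
    using norm_triangle_ineq3[of "x - z" "y - z"] by (intro mult_mono) auto
  moreover have "(norm (x - z))^2 - (norm (y - z))^2 = (norm (x - z) - norm (y - z)) * (norm (x - z) + norm (y - z))"
    by (simp add: power2_eq_square algebra_simps)
  ultimately show "dist ((norm (x - z))^2) ((norm (y - z))^2) \<le> 2 * (R + norm z) * dist x y"
    by (simp add: dist_real_def dist_norm abs_mult mult.commute)
qed (use assms in simp)

section \<open>The Lyapunov function\<close>

definition energy :: "(nat \<Rightarrow> 'a::real_inner \<Rightarrow> real) \<Rightarrow> nat \<Rightarrow> (real \<Rightarrow> real) \<Rightarrow> (real \<Rightarrow> 'a) \<Rightarrow> (real \<Rightarrow> 'a)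
    \<Rightarrow> 'a \<Rightarrow> real \<Rightarrow> real" where
  "energy f m \<gamma> X Z z t = fmin f m (X t) z + \<gamma> t / 2 * (norm (Z t - z))^2"

lemma abs_cont_on_energy:
  fixes X Z :: "real \<Rightarrow> 'a::real_inner"
  assumes "abs_cont_on a b X" "abs_cont_on a b Z" "abs_cont_on a b \<gamma>" "m \<ge> 1"
    and "\<And>j. j \<in> {1..m} \<Longrightarrow> strongly_convex_grad (f j) (g j) (mu j)" "\<And>j. j \<in> {1..m} \<Longrightarrow> mu j \<ge> 0"
    and "\<And>j. j \<in> {1..m} \<Longrightarrow> (L j)-lipschitz_on UNIV (g j)"
  shows "abs_cont_on a b (energy f m \<gamma> X Z z)"
proof -
  obtain RX where "RX \<ge> 0" "X ` {a..b} \<subseteq> cball 0 RX" using abs_cont_on_bounded[OF assms(1)] .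
  obtain RZ where "RZ \<ge> 0" "Z ` {a..b} \<subseteq> cball 0 RZ" using abs_cont_on_bounded[OF assms(2)] .
  have "(\<Sum>j\<in>{1..m}. norm (g j 0) + L j * RX)-lipschitz_on (cball 0 RX) (\<lambda>x. fmin f m x z)"
    using assms(4) \<open>RX \<ge> 0\<close> assms(5-7) by (rule lipschitz_on_cball_fmin)
  from abs_cont_on_lipschitz_compose[OF assms(1) this \<open>X ` {a..b} \<subseteq> cball 0 RX\<close>]
  have F: "abs_cont_on a b (\<lambda>s. fmin f m (X s) z)" .
  from abs_cont_on_lipschitz_compose[OF assms(2) lipschitz_on_cball_norm_diff_power2[OF \<open>RZ \<ge> 0\<close>]
      \<open>Z ` {a..b} \<subseteq> cball 0 RZ\<close>]
  have N: "abs_cont_on a b (\<lambda>s. (norm (Z s - z))^2)" .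
  show ?thesis unfolding energy_def[abs_def]
    by (rule abs_cont_on_add[OF F abs_cont_on_mult[OF abs_cont_on_divide_const[OF assms(3)] N]])
qed

lemma fmin_add_inner_Cset_le:
  assumes sconv: "\<And>j. j \<in> {1..m} \<Longrightarrow> strongly_convex_grad (f j) (g j) (mu j)"
    and mu_le: "\<And>j. j \<in> {1..m} \<Longrightarrow> \<mu> \<le> mu j" and "w \<in> Cset g m x"
  shows "fmin f m x z + inner w (z - x) + \<mu> / 2 * (norm (z - x))^2 \<le> 0"
proof -
  define c where "c = - fmin f m x z - \<mu> / 2 * (norm (z - x))^2"
  have "(\<lambda>j. g j x) ` {1..m} \<subseteq> {w. inner (z - x) w \<le> c}"
  proof clarify
    fix j assume j: "j \<in> {1..m}"
    have "f j z \<ge> f j x + inner (g j x) (z - x) + mu j / 2 * (norm (z - x))^2"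
      using sconv[OF j] unfolding strongly_convex_grad_def by blast
    moreover have "\<mu> / 2 * (norm (z - x))^2 \<le> mu j / 2 * (norm (z - x))^2"
      using mu_le[OF j] by (intro mult_right_mono) auto
    moreover have "fmin f m x z \<le> f j x - f j z" using j unfolding fmin_def by simp
    ultimately show "inner (z - x) (g j x) \<le> c" unfolding c_def by (simp add: inner_commute)
  qed
  then have "Cset g m x \<subseteq> {w. inner (z - x) w \<le> c}"
    unfolding Cset_def by (intro hull_minimal convex_halfspace_le)
  with \<open>w \<in> Cset g m x\<close> show ?thesis by (auto simp: c_def inner_commute)
qed

lemma lyapunov_derivative_bound:
  fixes x y z v Y' :: "'a::real_inner"
  assumes active: "d \<le> inner v (y - x)"
    and gap: "F + inner v (z - x) + \<mu> / 2 * (norm (z - x))^2 \<le> 0"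
    and ode: "G *\<^sub>R Y' = \<mu> *\<^sub>R (x - y) - v"
  shows "d + ((\<mu> - G) / 2 * (norm (y - z))^2 + 2 * inner (y - z) Y' * (G / 2))
    \<le> - (F + G / 2 * (norm (y - z))^2) - \<mu> / 2 * (norm (y - x))^2"
proof -
  have "2 * inner (y - z) Y' * (G / 2) = inner (y - z) (G *\<^sub>R Y')" by simp
  also have "\<dots> = \<mu> * inner (y - z) (x - y) - inner (y - z) v" unfolding ode by (simp add: inner_diff_right)
  finally have ode': "2 * inner (y - z) Y' * (G / 2) = \<mu> * inner (y - z) (x - y) - inner (y - z) v" .
  have "inner v (y - x) - inner (y - z) v = inner v (z - x)"
    by (simp add: inner_diff_left inner_diff_right inner_commute)
  moreover have "(norm (z - x))^2 = (norm (y - z))^2 + 2 * inner (y - z) (x - y) + (norm (y - x))^2"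
    by (simp add: power2_norm_eq_inner inner_diff_left inner_diff_right inner_commute algebra_simps)
  then have "\<mu> / 2 * (norm (z - x))^2 = \<mu> / 2 * (norm (y - z))^2 + \<mu> * inner (y - z) (x - y) + \<mu> / 2 * (norm (y - x))^2"
    by (simp add: distrib_left)
  moreover have "(\<mu> - G) / 2 * (norm (y - z))^2 = \<mu> / 2 * (norm (y - z))^2 - G / 2 * (norm (y - z))^2"
    by (simp add: diff_divide_distrib left_diff_distrib)
  ultimately show ?thesis using active gap ode' by linarith
qed

lemma energy_derivative_le:
  fixes f :: "nat \<Rightarrow> 'a::real_inner \<Rightarrow> real" and g :: "nat \<Rightarrow> 'a \<Rightarrow> 'a" and X Z :: "real \<Rightarrow> 'a"
  assumes sconv: "\<And>j. j \<in> {1..m} \<Longrightarrow> strongly_convex_grad (f j) (g j) (mu j)"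
    and mu_le: "\<And>j. j \<in> {1..m} \<Longrightarrow> \<mu> \<le> mu j"
    and gamma: "(\<gamma> has_real_derivative \<mu> - \<gamma> t) (at t)"
    and dZ: "(Z has_vector_derivative Z') (at t)"
    and v: "v \<in> argmin_set (\<lambda>v. inner (X t - Z t) v) (Cset g m (X t))"
    and Z': "\<gamma> t *\<^sub>R Z' = \<mu> *\<^sub>R (X t - Z t) - v"
    and "j \<in> {1..m}"
    and dF: "((\<lambda>s. fmin f m (X s) z) has_real_derivative inner (g j (X t)) (Z t - X t)) (at t)"
  shows "\<exists>D. (energy f m \<gamma> X Z z has_real_derivative D) (at t) \<and>
    D \<le> - energy f m \<gamma> X Z z t - \<mu> / 2 * (norm (Z t - X t))^2"
proof -
  have "g j (X t) \<in> Cset g m (X t)" unfolding Cset_def using \<open>j \<in> {1..m}\<close> by (intro hull_inc) auto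
  with v have "inner (X t - Z t) v \<le> inner (X t - Z t) (g j (X t))" by (auto simp: argmin_set_def)
  then have active: "inner (g j (X t)) (Z t - X t) \<le> inner v (Z t - X t)"
    by (simp add: inner_commute inner_diff_left inner_diff_right)
  have gap: "fmin f m (X t) z + inner v (z - X t) + \<mu> / 2 * (norm (z - X t))^2 \<le> 0"
    using v sconv mu_le by (intro fmin_add_inner_Cset_le) (auto simp: argmin_set_def)
  have "(energy f m \<gamma> X Z z has_real_derivative inner (g j (X t)) (Z t - X t)
      + ((\<mu> - \<gamma> t) / 2 * (norm (Z t - z))^2 + 2 * inner (Z t - z) Z' * (\<gamma> t / 2))) (at t)"
    unfolding energy_def[abs_def]
    by (rule DERIV_add[OF dF DERIV_mult[OF DERIV_cdivide[OF gamma] has_real_derivative_norm_diff_power2[OF dZ]]])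
  with lyapunov_derivative_bound[OF active gap Z'] show ?thesis by (auto simp: energy_def)
qed

lemma AE_energy_derivative_le:
  fixes f :: "nat \<Rightarrow> 'a::real_inner \<Rightarrow> real" and g :: "nat \<Rightarrow> 'a \<Rightarrow> 'a" and X Z :: "real \<Rightarrow> 'a"
  assumes m: "m \<ge> 1"
    and deriv_f: "\<And>j x. j \<in> {1..m} \<Longrightarrow> (f j has_derivative (\<lambda>h. inner (g j x) h)) (at x)"
    and sconv: "\<And>j. j \<in> {1..m} \<Longrightarrow> strongly_convex_grad (f j) (g j) (mu j)"
    and mu_le: "\<And>j. j \<in> {1..m} \<Longrightarrow> \<mu> \<le> mu j"
    and gamma: "\<And>t. (\<gamma> has_real_derivative \<mu> - \<gamma> t) (at t)"
    and ode: "AE t in lborel. t > 0 \<longrightarrow>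
        (\<exists>X' Z'. (X has_vector_derivative X') (at t) \<and> (Z has_vector_derivative Z') (at t) \<and>
           X' = Z t - X t \<and>
           \<gamma> t *\<^sub>R Z' \<in> (\<lambda>v. \<mu> *\<^sub>R (X t - Z t) - v) `
              argmin_set (\<lambda>v. inner (X t - Z t) v) (Cset g m (X t)))"
  shows "AE t in lborel. t > 0 \<longrightarrow> (\<exists>D. (energy f m \<gamma> X Z z has_real_derivative D) (at t) \<and>
    D \<le> - energy f m \<gamma> X Z z t - \<mu> / 2 * (norm (Z t - X t))^2)"
proof -
  have "{1..m} \<noteq> {}" using m by simp
  from ode AE_has_real_derivative_Min[OF finite_atLeastAtMost this, of "\<lambda>j s. f j (X s) - f j z"]
  show ?thesis
  proof eventually_elim
    case (elim t)
    show ?case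
    proof
      assume "t > 0"
      with elim(1) obtain Z' v where dX: "(X has_vector_derivative Z t - X t) (at t)"
        and dZ: "(Z has_vector_derivative Z') (at t)"
        and v: "v \<in> argmin_set (\<lambda>v. inner (X t - Z t) v) (Cset g m (X t))"
        and Z': "\<gamma> t *\<^sub>R Z' = \<mu> *\<^sub>R (X t - Z t) - v"
        by blast
      have "((\<lambda>s. f j (X s) - f j z) has_real_derivative inner (g j (X t)) (Z t - X t)) (at t)"
        if "j \<in> {1..m}" for j
        using DERIV_diff[OF has_real_derivative_gradient_compose[OF deriv_f[OF that] dX] DERIV_const] by simp
      from elim(2)[rule_format, OF this] obtain j where "j \<in> {1..m}"
        and "((\<lambda>s. fmin f m (X s) z) has_real_derivative inner (g j (X t)) (Z t - X t)) (at t)"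
        unfolding fmin_def by blast
      then show "\<exists>D. (energy f m \<gamma> X Z z has_real_derivative D) (at t) \<and>
          D \<le> - energy f m \<gamma> X Z z t - \<mu> / 2 * (norm (Z t - X t))^2"
        using energy_derivative_le[where X = X and Z = Z and t = t, OF sconv mu_le gamma[of t] dZ v Z'] by blast
    qed
  qed
qed

lemma abs_cont_on_exp: "abs_cont_on a b exp"
  by (rule abs_cont_on_C1[OF DERIV_exp]) (intro continuous_intros)

lemma exp_decay_of_derivative_le:
  fixes \<phi> :: "real \<Rightarrow> real"
  assumes "T \<ge> 0" and \<phi>: "abs_cont_on 0 T \<phi>"
    and deriv: "AE t in lborel. 0 < t \<longrightarrow> (\<exists>D. (\<phi> has_real_derivative D) (at t) \<and> D \<le> - \<phi> t)"
  shows "\<phi> T \<le> exp (- T) * \<phi> 0"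
proof -
  have "exp T * \<phi> T \<le> exp 0 * \<phi> 0"
  proof (rule abs_cont_on_nonincreasing[OF \<open>T \<ge> 0\<close> abs_cont_on_mult[OF abs_cont_on_exp \<phi>]])
    show "AE t in lborel. 0 < t \<longrightarrow> t < T \<longrightarrow> (\<exists>D\<le>0. ((\<lambda>t. exp t * \<phi> t) has_real_derivative D) (at t))"
      using deriv
    proof eventually_elim
      case (elim t)
      show ?case
      proof (intro impI)
        assume "0 < t"
        with elim obtain D where D: "(\<phi> has_real_derivative D) (at t)" "D \<le> - \<phi> t" by blast
        have "exp t * \<phi> t + exp t * D \<le> 0"
          using D(2) mult_left_mono[of D "- \<phi> t" "exp t"] by simp
        with DERIV_mult[OF DERIV_exp D(1)] show "\<exists>D\<le>0. ((\<lambda>t. exp t * \<phi> t) has_real_derivative D) (at t)"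
          by (auto simp: mult.commute)
      qed
    qed
  qed
  then have "exp (- T) * (exp T * \<phi> T) \<le> exp (- T) * \<phi> 0" by simp
  then show ?thesis by (simp add: exp_minus field_simps)
qed

lemma energy_exp_decay:
  fixes X Z :: "real \<Rightarrow> 'a::real_inner"
  assumes "loc_abs_cont X" "loc_abs_cont Z" "loc_abs_cont \<gamma>" "m \<ge> 1"
    and "\<And>j. j \<in> {1..m} \<Longrightarrow> strongly_convex_grad (f j) (g j) (mu j)" "\<And>j. j \<in> {1..m} \<Longrightarrow> mu j \<ge> 0"
    and "\<And>j. j \<in> {1..m} \<Longrightarrow> (L j)-lipschitz_on UNIV (g j)" and "\<mu> \<ge> 0"
    and deriv: "AE t in lborel. t > 0 \<longrightarrow> (\<exists>D. (energy f m \<gamma> X Z z has_real_derivative D) (at t) \<and>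
      D \<le> - energy f m \<gamma> X Z z t - \<mu> / 2 * (norm (Z t - X t))^2)"
    and "t \<ge> 0"
  shows "energy f m \<gamma> X Z z t \<le> exp (- t) * energy f m \<gamma> X Z z 0"
proof (rule exp_decay_of_derivative_le[OF \<open>t \<ge> 0\<close>])
  show "abs_cont_on 0 t (energy f m \<gamma> X Z z)"
    using assms(1-3) \<open>t \<ge> 0\<close> unfolding loc_abs_cont_def by (intro abs_cont_on_energy[OF _ _ _ assms(4-7)]) auto
  show "AE t in lborel. 0 < t \<longrightarrow> (\<exists>D. (energy f m \<gamma> X Z z has_real_derivative D) (at t) \<and> D \<le> - energy f m \<gamma> X Z z t)"
    using deriv by eventually_elim (use \<open>\<mu> \<ge> 0\<close> in \<open>fastforce intro: order_trans\<close>)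
qed

theorem mainTheorem6:
  fixes f :: "nat \<Rightarrow> real^'n \<Rightarrow> real"
    and g :: "nat \<Rightarrow> real^'n \<Rightarrow> real^'n"
    and L mu :: "nat \<Rightarrow> real"
    and m :: nat
    and \<mu> \<gamma>0 :: real
    and \<gamma> :: "real \<Rightarrow> real"
    and x0 x1 :: "real^'n"
    and X Z :: "real \<Rightarrow> real^'n"
  assumes m: "m \<ge> 1"
    and deriv_f: "\<And>j x. j \<in> {1..m} \<Longrightarrow> (f j has_derivative (\<lambda>h. inner (g j x) h)) (at x)"
    and cont_g: "\<And>j. j \<in> {1..m} \<Longrightarrow> continuous_on UNIV (g j)"
    and lip_g: "\<And>j. j \<in> {1..m} \<Longrightarrow> lipschitz_on (L j) UNIV (g j)"
    and sconv: "\<And>j. j \<in> {1..m} \<Longrightarrow> strongly_convex_grad (f j) (g j) (mu j)"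
    and mu_bounds: "\<And>j. j \<in> {1..m} \<Longrightarrow> 0 \<le> mu j \<and> mu j \<le> L j"
    and mu_def: "\<mu> = Min (mu ` {1..m})"
    and gamma0: "\<gamma>0 > 0"
    and gamma_def: "\<And>t. \<gamma> t = \<mu> + (\<gamma>0 - \<mu>) * exp (- t)"
    and X_ac: "loc_abs_cont X" and Z_ac: "loc_abs_cont Z"
    and X0: "X 0 = x0" and Z0: "Z 0 = x0 + x1"
    and ode: "AE t in lborel. t > 0 \<longrightarrow>
        (\<exists>X' Z'. (X has_vector_derivative X') (at t) \<and> (Z has_vector_derivative Z') (at t) \<and>
           X' = Z t - X t \<and>
           \<gamma> t *\<^sub>R Z' \<in> (\<lambda>v. \<mu> *\<^sub>R (X t - Z t) - v) `
              argmin_set (\<lambda>v. inner (X t - Z t) v) (Cset g m (X t)))"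
  shows "\<forall>z. (AE t in lborel. t > 0 \<longrightarrow>
            (\<exists>D. ((\<lambda>s. fmin f m (X s) z + \<gamma> s / 2 * (norm (Z s - z))^2) has_real_derivative D) (at t) \<and>
                 D \<le> - (fmin f m (X t) z + \<gamma> t / 2 * (norm (Z t - z))^2)
                      - \<mu> / 2 * (norm (Z t - X t))^2))
         \<and> (\<forall>t>0. fmin f m (X t) z + \<gamma> t / 2 * (norm (Z t - z))^2
                  \<le> exp (- t) * (fmin f m x0 z + \<gamma>0 / 2 * (norm (x0 + x1 - z))^2))"
proof -
  have "{1..m} \<noteq> {}" using m by simp
  then have mu_le: "\<And>j. j \<in> {1..m} \<Longrightarrow> \<mu> \<le> mu j" and "\<mu> \<in> mu ` {1..m}" unfolding mu_def by auto
  then have "\<mu> \<ge> 0" using mu_bounds by auto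
  have \<gamma>_eq: "\<gamma> = (\<lambda>t. \<mu> + (\<gamma>0 - \<mu>) * exp (- t))" using gamma_def by blast
  have d\<gamma>: "(\<gamma> has_real_derivative \<mu> - \<gamma> t) (at t)" for t
    unfolding \<gamma>_eq by (auto intro!: derivative_eq_intros simp: algebra_simps)
  have "loc_abs_cont \<gamma>"
    unfolding loc_abs_cont_def \<gamma>_eq by (intro allI impI abs_cont_on_C1[OF d\<gamma>[unfolded \<gamma>_eq]] continuous_intros)
  have deriv: "AE t in lborel. t > 0 \<longrightarrow> (\<exists>D. (energy f m \<gamma> X Z z has_real_derivative D) (at t) \<and>
      D \<le> - energy f m \<gamma> X Z z t - \<mu> / 2 * (norm (Z t - X t))^2)" for z
    by (rule AE_energy_derivative_le[OF m deriv_f sconv mu_le d\<gamma> ode])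
  have decay: "energy f m \<gamma> X Z z t \<le> exp (- t) * energy f m \<gamma> X Z z 0" if "t \<ge> 0" for z t
    using mu_bounds by (intro energy_exp_decay[OF X_ac Z_ac \<open>loc_abs_cont \<gamma>\<close> m sconv _ lip_g \<open>\<mu> \<ge> 0\<close> deriv that]) auto
  show ?thesis
    using deriv decay X0 Z0 gamma_def[of 0] unfolding energy_def[abs_def] by auto
qed

end
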